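(* Let $m\le n$ be nonnegative integers and $\delta=(\delta_1,\dots,\delta_m)\in\mathbb N^m$. Then every highest weight vertex $b=b_1\otimes\cdots\otimes b_m$ of the $C_n$-crystal $B^{C_n}_\delta=B^{C_n}_{\delta_1}\otimes\cdots\otimes B^{C_n}_{\delta_m}$ contains only letters from the set $\{1,2,\dots,m,\overline{m-1},\overline{m-2},\dots,\overline{1}\}$ (i.e., every letter of every word $b_j$ lies in this set).
   Context: The crystal $B_1^{C_n}$ of the vector representation of $U_q(\mathfrak{sp}_{2n})$ has vertices $1,\dots,n,\overline n,\dots,\overline1$, weights $\mathrm{wt}(i)=\varepsilon_i$, $\mathrm{wt}(\overline i)=-\varepsilon_i$, and arrows $i\xrightarrow{i}i+1$, $\overline{i+1}\xrightarrow{i}\overline i$ for $1\le i<n$, $n\xrightarrow{n}\overline n$. $B^{C_n}_s$ is the Kashiwara–Nakashima crystal $B(s\omega_1)$, whose vertices are labelled by the weakly decreasing words $x_1x_2\cdots x_s$ ($x_1\ge\cdots\ge x_s$) in the ordered alphabet $1<2<\cdots<n<\overline n<\cdots<\overline1$; $B_0$ has one vertex (the empty word). Tensor products use the rule $\tilde f_i(b\otimes b')=\tilde f_ib\otimes b'$ if $\varphi_i(b)>\varepsilon_i(b')$ and $b\otimes\tilde f_ib'$ otherwise; $\tilde e_i(b\otimes b')=\tilde e_ib\otimes b'$ if $\varphi_i(b)\ge\varepsilon_i(b')$ and $b\otimes\tilde e_ib'$ otherwise. A highest weight vertex is one with $\varepsilon_i(b)=0$ for all $i\in\{1,\dots,n\}$.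 *)

theory Defs
  imports Main
begin

text \<open>Letters of the C_n alphabet, encoded as integers: the letter i is the integer i
  and the letter bar-i is the integer -i (1 <= i <= n).\<close>

definition letters :: "nat \<Rightarrow> int set" where
  "letters n = {x. 1 \<le> \<bar>x\<bar> \<and> \<bar>x\<bar> \<le> int n}"

text \<open>Position in the order 1 < 2 < ... < n < bar n < ... < bar 1.\<close>
definition lkey :: "nat \<Rightarrow> int \<Rightarrow> int" where
  "lkey n x = (if x > 0 then x else 2 * int n + 1 + x)"

text \<open>Crystal B_1 of the vector representation: arrows i -> i+1 and bar(i+1) -> bar i
  with colour i (1 <= i < n), and n -> bar n with colour n.\<close>

definition f1 :: "nat \<Rightarrow> nat \<Rightarrow> int \<Rightarrow> int option" where
  "f1 n i x =
     (if 1 \<le> i \<and> i < n \<and> x = int i then Some (int i + 1)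
      else if 1 \<le> i \<and> i < n \<and> x = - (int i + 1) then Some (- int i)
      else if i = n \<and> 1 \<le> n \<and> x = int n then Some (- int n)
      else None)"

definition e1 :: "nat \<Rightarrow> nat \<Rightarrow> int \<Rightarrow> int option" where
  "e1 n i x =
     (if 1 \<le> i \<and> i < n \<and> x = int i + 1 then Some (int i)
      else if 1 \<le> i \<and> i < n \<and> x = - int i then Some (- (int i + 1))
      else if i = n \<and> 1 \<le> n \<and> x = - int n then Some (int n)
      else None)"

definition eps1 :: "nat \<Rightarrow> nat \<Rightarrow> int \<Rightarrow> int" where
  "eps1 n i x = (if e1 n i x = None then 0 else 1)"

definition phi1 :: "nat \<Rightarrow> nat \<Rightarrow> int \<Rightarrow> int" where
  "phi1 n i x = (if f1 n i x = None then 0 else 1)"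

text \<open>Tensor powers of B_1: the list [x1,...,xN] is x1 \<otimes> (x2 \<otimes> (... \<otimes> xN)),
  the empty list being the unique element of the trivial crystal.  Kashiwara's
  tensor product rule (as in the paper) together with the usual formulas for
  epsilon and phi of a tensor product.\<close>

fun epsT :: "nat \<Rightarrow> nat \<Rightarrow> int list \<Rightarrow> int"
and phiT :: "nat \<Rightarrow> nat \<Rightarrow> int list \<Rightarrow> int" where
  "epsT n i [] = 0"
| "epsT n i (x # w) =
     max (eps1 n i x) (epsT n i w - (phi1 n i x - eps1 n i x))"
| "phiT n i [] = 0"
| "phiT n i (x # w) =
     max (phiT n i w) (phi1 n i x + (phiT n i w - epsT n i w))"

fun eT :: "nat \<Rightarrow> nat \<Rightarrow> int list \<Rightarrow> int list option" where
  "eT n i [] = None"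
| "eT n i (x # w) =
     (if phi1 n i x \<ge> epsT n i w then map_option (\<lambda>y. y # w) (e1 n i x)
      else map_option (\<lambda>v. x # v) (eT n i w))"

fun fT :: "nat \<Rightarrow> nat \<Rightarrow> int list \<Rightarrow> int list option" where
  "fT n i [] = None"
| "fT n i (x # w) =
     (if phi1 n i x > epsT n i w then map_option (\<lambda>y. y # w) (f1 n i x)
      else map_option (\<lambda>v. x # v) (fT n i w))"

text \<open>The Kashiwara--Nakashima row crystal B_s = B(s omega_1): weakly decreasing
  words x1 >= ... >= xs, realised inside B_1^{\<otimes> s} via x1 \<otimes> ... \<otimes> xs.\<close>

definition row :: "nat \<Rightarrow> nat \<Rightarrow> int list set" where
  "row n s = {w. length w = s \<and> set w \<subseteq> letters n
                 \<and> sorted_wrt (\<lambda>a b. lkey n b \<le> lkey n a) w}"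

text \<open>An element b1 \<otimes> ... \<otimes> bm of B_{delta_1} \<otimes> ... \<otimes> B_{delta_m} is given by the list
  [b1,...,bm]; by associativity of the tensor product its crystal data are those of
  the concatenated word in B_1^{\<otimes> N}.\<close>

definition tensor_elem :: "nat \<Rightarrow> nat list \<Rightarrow> int list list \<Rightarrow> bool" where
  "tensor_elem n \<delta> b \<longleftrightarrow> length b = length \<delta> \<and> (\<forall>j<length \<delta>. b ! j \<in> row n (\<delta> ! j))"

definition highest_weight :: "nat \<Rightarrow> int list list \<Rightarrow> bool" where
  "highest_weight n b \<longleftrightarrow> (\<forall>i\<in>{1..n}. epsT n i (concat b) = 0)"

end

theory Submission
  imports Defs
begin

text \<open>Give the letter i the level i and the letter bar i the level i + 1.  An i-arrow
  of B_1 ends at level i + 1 and starts at level i or i + 2, at level i + 2 exactly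
  when its source is larger than its target.  By the signature rule, in a highest
  weight word every letter x with e_i x defined is preceded by a letter y with f_i y
  defined; so x has level at most one more than y, and at most the level of y if y
  is not smaller than x.  As the rows are weakly decreasing, induction over the rows
  shows that all letters of the first j rows have level at most j.  The letters of
  level at most m are exactly 1, ..., m, bar (m - 1), ..., bar 1.\<close>

definition level :: "int \<Rightarrow> int" where
  "level x = (if x > 0 then x else 1 - x)"

lemma epsT_nonneg: "epsT n i w \<ge> 0"
  by (induction w) (auto simp: eps1_def intro: max.coboundedI1)

lemma epsT_le_epsT_append: "epsT n i u \<le> epsT n i (u @ v)"
  by (induction u) (simp_all add: epsT_nonneg)

lemma epsT_le_epsT_append_if_no_f1:
  assumes "\<forall>y\<in>set u. f1 n i y = None"
  shows "epsT n i w \<le> epsT n i (u @ w)"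
  using assms by (induction u) (auto simp: phi1_def eps1_def le_max_iff_disj)

lemma f1_before_e1_if_epsT_zero:
  assumes "epsT n i (u @ x # v) = 0" and "e1 n i x \<noteq> None"
  shows "\<exists>y\<in>set u. f1 n i y \<noteq> None"
proof (rule ccontr)
  assume "\<not> ?thesis"
  then have "epsT n i (x # v) \<le> 0"
    using epsT_le_epsT_append_if_no_f1[of u n i "x # v"] assms(1) by auto
  moreover have "eps1 n i x = 1"
    using assms(2) by (simp add: eps1_def)
  ultimately show False by simp
qed

lemma highest_weight_appendD: "highest_weight n (bs @ cs) \<Longrightarrow> highest_weight n bs"
  unfolding highest_weight_def
  by (metis concat_append epsT_le_epsT_append epsT_nonneg order_antisym)

lemma e1_defined_unless_one:
  assumes "x \<in> letters n" and "x \<noteq> 1"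
  shows "\<exists>i\<in>{1..n}. e1 n i x \<noteq> None"
proof -
  have "x \<ge> 2 \<and> x \<le> int n \<or> x \<le> -1 \<and> x > - int n \<or> x = - int n \<and> n \<ge> 1"
    using assms unfolding letters_def by auto
  then show ?thesis
  proof (elim disjE conjE)
    assume "x \<ge> 2" "x \<le> int n"
    then show ?thesis by (intro bexI[of _ "nat (x - 1)"]) (auto simp: e1_def)
  next
    assume "x \<le> -1" "x > - int n"
    then show ?thesis by (intro bexI[of _ "nat (- x)"]) (auto simp: e1_def)
  next
    assume "x = - int n" "n \<ge> 1"
    then show ?thesis by (intro bexI[of _ n]) (auto simp: e1_def)
  qed
qed

lemma level_e1_le_level_f1:
  assumes "e1 n i x \<noteq> None" and "f1 n i y \<noteq> None"
  shows "level x \<le> level y + 1"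
  using assms by (auto simp: e1_def f1_def level_def split: if_splits)

lemma level_e1_le_level_f1_if_lkey_le:
  assumes "e1 n i x \<noteq> None" and "f1 n i y \<noteq> None" and "lkey n x \<le> lkey n y"
  shows "level x \<le> level y"
  using assms by (auto simp: e1_def f1_def level_def lkey_def split: if_splits)

lemma level_row_le_Suc:
  assumes "0 \<le> L" and "\<forall>y\<in>set u. level y \<le> L"
    and "w \<in> row n s" and "\<forall>i\<in>{1..n}. epsT n i (u @ w) = 0"
  shows "\<forall>x\<in>set w. level x \<le> L + 1"
  using assms(3,4)
proof (induction w arbitrary: s rule: rev_induct)
  case Nil
  then show ?case by simp
next
  case (snoc x w)
  have row_w: "w \<in> row n (length w)" and x_letter: "x \<in> letters n"
    and x_le: "\<forall>y\<in>set w. lkey n x \<le> lkey n y"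
    using snoc.prems(1) by (auto simp: row_def sorted_wrt_append)
  have "\<forall>i\<in>{1..n}. epsT n i (u @ w) = 0"
    using snoc.prems(2) epsT_le_epsT_append[of n _ "u @ w" "[x]"] epsT_nonneg
    by (metis append_assoc order_antisym)
  then have IH: "\<forall>y\<in>set w. level y \<le> L + 1"
    using snoc.IH[OF row_w] by blast
  have "level x \<le> L + 1"
  proof (cases "x = 1")
    case True
    then show ?thesis using assms(1) by (simp add: level_def)
  next
    case False
    then obtain i where i: "i \<in> {1..n}" and e: "e1 n i x \<noteq> None"
      using e1_defined_unless_one x_letter by blast
    have "epsT n i ((u @ w) @ x # []) = 0"
      using snoc.prems(2) i by simp
    then obtain y where y: "y \<in> set u \<or> y \<in> set w" and f: "f1 n i y \<noteq> None"
      using f1_before_e1_if_epsT_zero[OF _ e] by fastforce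
    then show ?thesis
      using level_e1_le_level_f1[OF e f] level_e1_le_level_f1_if_lkey_le[OF e f]
        assms(2) IH x_le by force
  qed
  with IH show ?case by simp
qed

lemma highest_weight_level_le_length:
  assumes "\<forall>w\<in>set bs. \<exists>s. w \<in> row n s" and "highest_weight n bs"
  shows "\<forall>x\<in>set (concat bs). level x \<le> int (length bs)"
  using assms
proof (induction bs rule: rev_induct)
  case Nil
  then show ?case by simp
next
  case (snoc w bs)
  have IH: "\<forall>y\<in>set (concat bs). level y \<le> int (length bs)"
    using snoc.IH snoc.prems highest_weight_appendD by auto
  obtain s where "w \<in> row n s"
    using snoc.prems(1) by auto
  then have "\<forall>x\<in>set w. level x \<le> int (length bs) + 1"
    using level_row_le_Suc[OF _ IH] snoc.prems(2) by (simp add: highest_weight_def)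
  with IH show ?case by force
qed

theorem lemma25:
  fixes m n :: nat and \<delta> :: "nat list" and b :: "int list list"
  assumes "m \<le> n"
    and "length \<delta> = m"
    and "tensor_elem n \<delta> b"
    and "highest_weight n b"
  shows "\<forall>j<m. \<forall>x\<in>set (b ! j).
           (1 \<le> x \<and> x \<le> int m) \<or> (- (int m - 1) \<le> x \<and> x \<le> -1)"
proof (intro allI impI ballI)
  fix j x assume "j < m" and x: "x \<in> set (b ! j)"
  have len: "length b = m"
    using assms(2,3) by (simp add: tensor_elem_def)
  have rows: "\<forall>w\<in>set b. \<exists>s. w \<in> row n s"
    using assms(3) unfolding tensor_elem_def by (metis in_set_conv_nth)
  have x_concat: "x \<in> set (concat b)"
    using \<open>j < m\<close> x len by (simp add: set_concat) (metis nth_mem)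
  then have "x \<in> letters n"
    using rows by (auto simp: row_def)
  moreover have "level x \<le> int m"
    using highest_weight_level_le_length[OF rows assms(4)] x_concat len by auto
  ultimately show "(1 \<le> x \<and> x \<le> int m) \<or> (- (int m - 1) \<le> x \<and> x \<le> -1)"
    by (auto simp: letters_def level_def split: if_splits)
qed

end
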